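(* Let $A=\mathbb C[t]/(t^2)$ and $\lambda\in P^+$, and let $(\lambda_1^{\max},\lambda_2^{\max})$ be as defined below. Then $W_A(0,\lambda)\cong F_{\lambda_1^{\max},\lambda_2^{\max}}$ as $\mathfrak{sl}_n\otimes A$-modules (and hence as $\mathfrak{sl}_n\otimes\mathbb C[t]$-modules).
   Context: $\mathfrak{sl}_n=\mathfrak n^+\oplus\mathfrak h\oplus\mathfrak n^-$, $I=\{1,\dots,n-1\}$, $R^+$ positive roots, $\omega_1,\dots,\omega_{n-1}$ fundamental weights, $P^+$ dominant integral weights; for $\alpha\in R^+$ fix an $\mathfrak{sl}_2$-triple $e_\alpha,f_\alpha,h_\alpha$ with $f_\alpha\in\mathfrak g_{-\alpha}$. For a commutative algebra $A$, $\mathfrak{sl}_n\otimes A$ has bracket $[x\otimes p,y\otimes q]=[x,y]\otimes pq$. For $A=\mathbb C[t]/(t^2)$, the graded local Weyl module $W_A(0,\lambda)$ is the $\mathfrak{sl}_n\otimes A$-module generated by $w$ subject to $(\mathfrak n^+\otimes A).w=0$, $(\mathfrak h\otimes t).w=0$, $(h\otimes1).w=\lambda(h)w$ for $h\in\mathfrak h$, and $(f_\alpha\otimes1)^{\lambda(h_\alpha)+1}.w=0$ for $\alpha\in R^+$. For $\lambda_1,\lambda_2\in P^+$, $\nu=\lambda_1+\lambda_2$, $F_{\lambda_1,\lambda_2}$ is the $\mathfrak{sl}_n\otimes\mathbb C[t]$-module generated by $\mathbb 1$ subject to $(\mathfrak n^+\otimes\mathbb C[t]).\mathbb 1=0$,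 $(\mathfrak h\otimes t\mathbb C[t]).\mathbb 1=0$, $(\mathfrak n^-\otimes t^2\mathbb C[t]).\mathbb 1=0$, $(h\otimes1).\mathbb 1=\nu(h)\mathbb 1$, and for $\alpha\in R^+$: $(f_\alpha\otimes1)^{\nu(h_\alpha)+1}.\mathbb 1=0$, $(f_\alpha\otimes t)^{\min\{\lambda_1(h_\alpha),\lambda_2(h_\alpha)\}+1}.\mathbb 1=0$; it is annihilated by $\mathfrak{sl}_n\otimes t^2\mathbb C[t]$, hence an $\mathfrak{sl}_n\otimes A$-module. Write $\lambda=\sum_{i\in I}m_i\omega_i$ and let $i_1<\dots<i_k$ be the indices $i$ with $m_i$ odd, $I_{odd}=\{i_1,\dots,i_k\}$. Define $\lambda_1^{\max}=\sum_{s=1}^k\frac{m_{i_s}+(-1)^s}{2}\,\omega_{i_s}+\sum_{i\in I\setminus I_{odd}}\frac{m_i}{2}\,\omega_i$ and $\lambda_2^{\max}=\lambda-\lambda_1^{\max}$. *)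

theory Defs
  imports Complex_Main "HOL-Computational_Algebra.Polynomial"
begin

text \<open>Elements of sl_n (x) C[t] are trace-zero n x n matrices over C[t] (indices 0..n-1),
  with Lie bracket the matrix commutator; this realises [x(x)p, y(x)q] = [x,y](x)pq.\<close>

type_synonym mat = "nat \<Rightarrow> nat \<Rightarrow> complex poly"

definition in_sl :: "nat \<Rightarrow> mat \<Rightarrow> bool" where
  "in_sl n X \<longleftrightarrow> (\<forall>i j. (n \<le> i \<or> n \<le> j) \<longrightarrow> X i j = 0) \<and> (\<Sum>i<n. X i i) = 0"

definition br :: "nat \<Rightarrow> mat \<Rightarrow> mat \<Rightarrow> mat" where
  "br n X Y = (\<lambda>i j. \<Sum>k<n. X i k * Y k j - Y i k * X k j)"

definition madd :: "mat \<Rightarrow> mat \<Rightarrow> mat" where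
  "madd X Y = (\<lambda>i j. X i j + Y i j)"

definition mscale :: "complex \<Rightarrow> mat \<Rightarrow> mat" where
  "mscale c X = (\<lambda>i j. smult c (X i j))"

definition elem :: "nat \<Rightarrow> nat \<Rightarrow> complex poly \<Rightarrow> mat" where
  "elem a b p = (\<lambda>i j. if i = a \<and> j = b then p else 0)"

definition diagonal :: "mat \<Rightarrow> bool" where
  "diagonal X \<longleftrightarrow> (\<forall>i j. i \<noteq> j \<longrightarrow> X i j = 0)"

definition strict_upper :: "mat \<Rightarrow> bool" where
  "strict_upper X \<longleftrightarrow> (\<forall>i j. j \<le> i \<longrightarrow> X i j = 0)"

definition strict_lower :: "mat \<Rightarrow> bool" where
  "strict_lower X \<longleftrightarrow> (\<forall>i j. i \<le> j \<longrightarrow> X i j = 0)"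

text \<open>Tensor algebra T(g) realised as the complex span of words over g (modulo linearity
  relations, which are put into the ideal below). Vectors are functions on words.\<close>

type_synonym vec = "mat list \<Rightarrow> complex"

inductive_set cspan :: "('a \<Rightarrow> complex) set \<Rightarrow> ('a \<Rightarrow> complex) set" for S where
  zero: "(\<lambda>_. 0) \<in> cspan S"
| base: "v \<in> S \<Longrightarrow> v \<in> cspan S"
| add: "v \<in> cspan S \<Longrightarrow> w \<in> cspan S \<Longrightarrow> (\<lambda>x. v x + w x) \<in> cspan S"
| smul: "v \<in> cspan S \<Longrightarrow> (\<lambda>x. c * v x) \<in> cspan S"

definition wd :: "mat list \<Rightarrow> vec" where
  "wd u = (\<lambda>w. if w = u then 1 else 0)"

definition words :: "nat \<Rightarrow> mat list set" where
  "words n = {u. \<forall>X\<in>set u. in_sl n X}"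

definition Tn :: "nat \<Rightarrow> vec set" where
  "Tn n = cspan (wd ` words n)"

definition lmul :: "mat list \<Rightarrow> vec \<Rightarrow> vec" where
  "lmul u v = (\<lambda>w. if take (length u) w = u then v (drop (length u) w) else 0)"

text \<open>Two-sided ideal of T(g) giving U(g): linearity of the generators and Lie relations.\<close>
definition LieRel :: "nat \<Rightarrow> vec set" where
  "LieRel n =
     {(\<lambda>w. wd (u @ [X, Y] @ v) w - wd (u @ [Y, X] @ v) w - wd (u @ [br n X Y] @ v) w) | u v X Y.
        u \<in> words n \<and> v \<in> words n \<and> in_sl n X \<and> in_sl n Y}
   \<union> {(\<lambda>w. wd (u @ [madd X Y] @ v) w - wd (u @ [X] @ v) w - wd (u @ [Y] @ v) w) | u v X Y.
        u \<in> words n \<and> v \<in> words n \<and> in_sl n X \<and> in_sl n Y}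
   \<union> {(\<lambda>w. wd (u @ [mscale c X] @ v) w - c * wd (u @ [X] @ v) w) | u v X c.
        u \<in> words n \<and> v \<in> words n \<and> in_sl n X}"

text \<open>Annihilator ideal of the cyclic generator of the module generated by one vector subject
  to the relations R (R a set of elements of U(g), written as elements of T(g)):
  the module is  Tn n / ideal n R.\<close>
definition ideal :: "nat \<Rightarrow> vec set \<Rightarrow> vec set" where
  "ideal n R = cspan (LieRel n \<union> {lmul u r | u r. u \<in> words n \<and> r \<in> R})"

text \<open>Isomorphism of the g-modules Tn n / L1 and Tn n / L2 (g acting by left multiplication).\<close>
definition mod_iso :: "nat \<Rightarrow> vec set \<Rightarrow> vec set \<Rightarrow> bool" where
  "mod_iso n L1 L2 \<longleftrightarrow> (\<exists>\<phi> :: vec \<Rightarrow> vec.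
     (\<forall>a\<in>Tn n. \<phi> a \<in> Tn n) \<and>
     (\<forall>a\<in>Tn n. \<forall>b\<in>Tn n. \<phi> (\<lambda>w. a w + b w) = (\<lambda>w. \<phi> a w + \<phi> b w)) \<and>
     (\<forall>c. \<forall>a\<in>Tn n. \<phi> (\<lambda>w. c * a w) = (\<lambda>w. c * \<phi> a w)) \<and>
     (\<forall>a\<in>Tn n. a \<in> L1 \<longleftrightarrow> \<phi> a \<in> L2) \<and>
     (\<forall>b\<in>Tn n. \<exists>a\<in>Tn n. (\<lambda>w. \<phi> a w - b w) \<in> L2) \<and>
     (\<forall>X. \<forall>a\<in>Tn n. in_sl n X \<longrightarrow> (\<lambda>w. \<phi> (lmul [X] a) w - lmul [X] (\<phi> a) w) \<in> L2))"

text \<open>Weights: lambda = sum_{i=1}^{n-1} m i * omega_i. For h = diag(d_0,..,d_{n-1}) in the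
  Cartan subalgebra, omega_i(h) = d_0 + ... + d_{i-1}.\<close>
definition wt_h :: "nat \<Rightarrow> (nat \<Rightarrow> nat) \<Rightarrow> (nat \<Rightarrow> complex) \<Rightarrow> complex" where
  "wt_h n m d = (\<Sum>i\<in>{1..<n}. of_nat (m i) * (\<Sum>k<i. d k))"

text \<open>For the positive root alpha = eps_a - eps_b (0-based, a < b < n), h_alpha = E_aa - E_bb,
  f_alpha = E_ba, and lambda(h_alpha) = m(a+1) + ... + m(b).\<close>
definition wt_root :: "(nat \<Rightarrow> nat) \<Rightarrow> nat \<Rightarrow> nat \<Rightarrow> nat" where
  "wt_root m a b = (\<Sum>l\<in>{a+1..b}. m l)"

definition one :: vec where "one = wd []"

definition h_rel :: "nat \<Rightarrow> (nat \<Rightarrow> nat) \<Rightarrow> vec set" where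
  "h_rel n m = {(\<lambda>w. wd [X] w - wt_h n m (\<lambda>i. coeff (X i i) 0) * one w) | X.
       in_sl n X \<and> diagonal X \<and> (\<forall>i. degree (X i i) = 0)}"

definition tsq :: "complex poly" where "tsq = [:0, 0, 1:]"

text \<open>Relations of the graded local Weyl module W_A(0,lambda), A = C[t]/(t^2), viewed as a
  module for sl_n (x) C[t] annihilated by sl_n (x) t^2 C[t]. Elements of sl_n (x) A are
  represented by matrices with entries of degree at most 1.\<close>
definition RelW :: "nat \<Rightarrow> (nat \<Rightarrow> nat) \<Rightarrow> vec set" where
  "RelW n m =
     {wd [X] | X. in_sl n X \<and> strict_upper X \<and> (\<forall>i j. degree (X i j) \<le> 1)}
   \<union> {wd [X] | X. in_sl n X \<and> diagonal X \<and> (\<forall>i. coeff (X i i) 0 = 0 \<and> degree (X i i) \<le> 1)}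
   \<union> h_rel n m
   \<union> {wd (replicate (wt_root m a b + 1) (elem b a 1)) | a b. a < b \<and> b < n}
   \<union> {wd [X] | X. in_sl n X \<and> (\<forall>i j. tsq dvd X i j)}"

definition RelF :: "nat \<Rightarrow> (nat \<Rightarrow> nat) \<Rightarrow> (nat \<Rightarrow> nat) \<Rightarrow> vec set" where
  "RelF n m1 m2 =
     {wd [X] | X. in_sl n X \<and> strict_upper X}
   \<union> {wd [X] | X. in_sl n X \<and> diagonal X \<and> (\<forall>i. coeff (X i i) 0 = 0)}
   \<union> {wd [X] | X. in_sl n X \<and> strict_lower X \<and> (\<forall>i j. tsq dvd X i j)}
   \<union> h_rel n (\<lambda>i. m1 i + m2 i)
   \<union> {wd (replicate (wt_root (\<lambda>i. m1 i + m2 i) a b + 1) (elem b a 1)) | a b. a < b \<and> b < n}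
   \<union> {wd (replicate (min (wt_root m1 a b) (wt_root m2 a b) + 1) (elem b a [:0, 1:])) | a b.
        a < b \<and> b < n}"

text \<open>lambda_1^max: for odd m_i, with i the s-th odd index (s = 1 + #odd indices below i),
  coefficient (m_i + (-1)^s)/2; for even m_i, coefficient m_i/2.\<close>
definition lam1max :: "(nat \<Rightarrow> nat) \<Rightarrow> nat \<Rightarrow> nat" where
  "lam1max m i =
     (if odd (m i) then
        (if even (card {j\<in>{1..<i}. odd (m j)} + 1) then (m i + 1) div 2 else (m i - 1) div 2)
      else m i div 2)"

definition lam2max :: "(nat \<Rightarrow> nat) \<Rightarrow> nat \<Rightarrow> nat" where
  "lam2max m i = m i - lam1max m i"

end

theory Submission
  imports Defs "HOL-Library.Function_Algebras"
begin

text \<open>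
  Both modules are quotients \<open>Tn n / ideal n R\<close> of the tensor algebra by the left ideal generated
  by their defining relations, so it suffices to show that each set of relations lies in the ideal
  generated by the other; the isomorphism is then the identity. Most relations correspond directly,
  after splitting a matrix into its part of degree at most one and a part divisible by \<open>t\<^sup>2\<close>, which
  acts by zero on both modules. The only substantial relation is
  \<open>(f\<^sub>\<alpha> \<otimes> t)\<^bsup>min(\<lambda>\<^sub>1(h\<^sub>\<alpha>), \<lambda>\<^sub>2(h\<^sub>\<alpha>)) + 1\<^esup> = 0\<close> in the Weyl module. Garland's identity
  \<open>(e\<^sub>\<alpha> \<otimes> t)\<^sup>k f\<^sub>\<alpha>\<^bsup>2k\<^esup> \<equiv> c\<^sub>k (f\<^sub>\<alpha> \<otimes> t)\<^sup>k\<close> with \<open>c\<^sub>k \<noteq> 0\<close>, together with \<open>f\<^sub>\<alpha>\<^bsup>\<lambda>(h\<^sub>\<alpha>)+1\<^esup> = 0\<close>, kills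
  \<open>(f\<^sub>\<alpha> \<otimes> t)\<^sup>k\<close> as soon as \<open>2k > \<lambda>(h\<^sub>\<alpha>)\<close>. For the maximal pair this holds with
  \<open>k = min(\<lambda>\<^sub>1(h\<^sub>\<alpha>), \<lambda>\<^sub>2(h\<^sub>\<alpha>)) + 1\<close>, because \<open>\<lambda>\<^sub>1\<close> and \<open>\<lambda>\<^sub>2\<close> differ by at most one on every
  root: the signs \<open>(-1)\<^sup>s\<close> attached to the odd coefficients of \<open>\<lambda>\<close> alternate, so the partial sums
  of \<open>\<lambda>\<^sub>1 - \<lambda>\<^sub>2\<close> stay in \<open>{-1, 0}\<close>.
\<close>

definition cscale :: "complex \<Rightarrow> ('a \<Rightarrow> complex) \<Rightarrow> 'a \<Rightarrow> complex" where
  "cscale c a = (\<lambda>x. c * a x)"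

lemma cspan_zero [simp]: "0 \<in> cspan S"
  using cspan.zero by (simp add: zero_fun_def)

lemma cspan_add: "a \<in> cspan S \<Longrightarrow> b \<in> cspan S \<Longrightarrow> a + b \<in> cspan S"
  using cspan.add by (simp add: plus_fun_def)

lemma cspan_cscale: "a \<in> cspan S \<Longrightarrow> cscale c a \<in> cspan S"
  unfolding cscale_def by (rule cspan.smul)

lemma cspan_uminus: "a \<in> cspan S \<Longrightarrow> - a \<in> cspan S"
  using cspan_cscale[of a S "-1"] by (simp add: cscale_def fun_Compl_def)

lemma cscale_diff: "cscale c a - cscale c b = cscale c (a - b)"
  by (simp add: cscale_def fun_eq_iff algebra_simps)

lemma cscale_cscale [simp]: "cscale c (cscale d a) = cscale (c * d) a"
  by (simp add: cscale_def fun_eq_iff)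

lemma cscale_1 [simp]: "cscale 1 a = a"
  by (simp add: cscale_def)

lemma cscale_0 [simp]: "cscale 0 a = 0"
  by (simp add: cscale_def zero_fun_def)

lemma cscale_add: "cscale c a + cscale d a = cscale (c + d) a"
  by (simp add: cscale_def fun_eq_iff algebra_simps)

definition cong_mod :: "('a \<Rightarrow> complex) set \<Rightarrow> ('a \<Rightarrow> complex) \<Rightarrow> ('a \<Rightarrow> complex) \<Rightarrow> bool" where
  "cong_mod J a b \<longleftrightarrow> a - b \<in> J"

lemma cong_mod_refl [simp]: "cong_mod (ideal n R) a a"
  by (simp add: cong_mod_def ideal_def)

lemma cong_mod_sym: "cong_mod (ideal n R) a b \<Longrightarrow> cong_mod (ideal n R) b a"
  unfolding cong_mod_def ideal_def using cspan_uminus by fastforce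

lemma cong_mod_trans [trans]:
  "cong_mod (ideal n R) a b \<Longrightarrow> cong_mod (ideal n R) b c \<Longrightarrow> cong_mod (ideal n R) a c"
  unfolding cong_mod_def ideal_def using cspan_add by fastforce

lemma cong_mod_add:
  "cong_mod (ideal n R) a b \<Longrightarrow> cong_mod (ideal n R) c d \<Longrightarrow> cong_mod (ideal n R) (a + c) (b + d)"
  unfolding cong_mod_def ideal_def using cspan_add by (fastforce simp: algebra_simps)

lemma cong_mod_cscale: "cong_mod (ideal n R) a b \<Longrightarrow> cong_mod (ideal n R) (cscale c a) (cscale c b)"
  unfolding cong_mod_def ideal_def cscale_diff by (rule cspan_cscale)

lemma cong_mod_add_member: "c \<in> J \<Longrightarrow> cong_mod J (b + c) b"
  by (simp add: cong_mod_def)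

lemma ideal_add: "a \<in> ideal n R \<Longrightarrow> b \<in> ideal n R \<Longrightarrow> a + b \<in> ideal n R"
  unfolding ideal_def by (rule cspan_add)

lemma cong_mod_member: "cong_mod (ideal n R) a b \<Longrightarrow> b \<in> ideal n R \<Longrightarrow> a \<in> ideal n R"
  using ideal_add by (fastforce simp: cong_mod_def)

lemma words_append [simp]: "u @ v \<in> words n \<longleftrightarrow> u \<in> words n \<and> v \<in> words n"
  by (auto simp: words_def)

lemma words_Cons [simp]: "X # v \<in> words n \<longleftrightarrow> in_sl n X \<and> v \<in> words n"
  by (auto simp: words_def)

lemma words_Nil [simp]: "[] \<in> words n"
  by (simp add: words_def)

lemma words_replicate [simp]: "in_sl n X \<Longrightarrow> replicate k X \<in> words n"
  by (simp add: words_def)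

lemma lmul_wd [simp]: "lmul u (wd v) = wd (u @ v)"
  unfolding lmul_def wd_def by (auto simp: fun_eq_iff) (metis append_take_drop_id)

lemma lmul_Nil [simp]: "lmul [] a = a"
  by (simp add: lmul_def)

lemma take_add_eq_append_iff:
  "take (length u + length v) w = u @ v \<longleftrightarrow>
   take (length u) w = u \<and> take (length v) (drop (length u) w) = v"
proof
  assume h: "take (length u + length v) w = u @ v"
  have "take (length u) w = take (length u) (take (length u + length v) w)"
    by (simp add: min_def)
  moreover have "take (length v) (drop (length u) w) = drop (length u) (take (length u + length v) w)"
    by (simp add: drop_take)
  ultimately show "take (length u) w = u \<and> take (length v) (drop (length u) w) = v"
    using h by simp
qed (simp add: take_add)

lemma lmul_lmul: "lmul u (lmul v a) = lmul (u @ v) a"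
  unfolding lmul_def by (auto simp: fun_eq_iff take_add_eq_append_iff drop_drop add.commute)

lemma lmul_pointwise:
  "lmul u (\<lambda>w. a w + b w) = (\<lambda>w. lmul u a w + lmul u b w)"
  "lmul u (\<lambda>w. a w - b w) = (\<lambda>w. lmul u a w - lmul u b w)"
  "lmul u (\<lambda>w. c * a w) = (\<lambda>w. c * lmul u a w)"
  "lmul u (\<lambda>_. 0) = (\<lambda>_. 0)"
  by (simp_all add: lmul_def fun_eq_iff)

lemma LieRel_commutator:
  "\<lbrakk>p \<in> words n; q \<in> words n; in_sl n X; in_sl n Y\<rbrakk> \<Longrightarrow>
   (\<lambda>w. wd (p @ [X, Y] @ q) w - wd (p @ [Y, X] @ q) w - wd (p @ [br n X Y] @ q) w) \<in> LieRel n"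
  unfolding LieRel_def by blast

lemma LieRel_madd:
  "\<lbrakk>p \<in> words n; q \<in> words n; in_sl n X; in_sl n Y\<rbrakk> \<Longrightarrow>
   (\<lambda>w. wd (p @ [madd X Y] @ q) w - wd (p @ [X] @ q) w - wd (p @ [Y] @ q) w) \<in> LieRel n"
  unfolding LieRel_def by blast

lemma LieRel_mscale:
  "\<lbrakk>p \<in> words n; q \<in> words n; in_sl n X\<rbrakk> \<Longrightarrow>
   (\<lambda>w. wd (p @ [mscale c X] @ q) w - c * wd (p @ [X] @ q) w) \<in> LieRel n"
  unfolding LieRel_def by blast

lemma LieRel_lmul:
  assumes r: "r \<in> LieRel n" and u: "u \<in> words n"
  shows "lmul u r \<in> LieRel n"
  using r[unfolded LieRel_def]
proof (elim UnE CollectE exE conjE)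
  fix p q X Y
  assume "r = (\<lambda>w. wd (p @ [X, Y] @ q) w - wd (p @ [Y, X] @ q) w - wd (p @ [br n X Y] @ q) w)"
    "p \<in> words n" "q \<in> words n" "in_sl n X" "in_sl n Y"
  with u show ?thesis
    using LieRel_commutator[of "u @ p" n q X Y] by (simp add: lmul_pointwise)
next
  fix p q X Y
  assume "r = (\<lambda>w. wd (p @ [madd X Y] @ q) w - wd (p @ [X] @ q) w - wd (p @ [Y] @ q) w)"
    "p \<in> words n" "q \<in> words n" "in_sl n X" "in_sl n Y"
  with u show ?thesis
    using LieRel_madd[of "u @ p" n q X Y] by (simp add: lmul_pointwise)
next
  fix p q X c
  assume "r = (\<lambda>w. wd (p @ [mscale c X] @ q) w - c * wd (p @ [X] @ q) w)"
    "p \<in> words n" "q \<in> words n" "in_sl n X"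
  with u show ?thesis
    using LieRel_mscale[of "u @ p" n q X c] by (simp add: lmul_pointwise)
qed

lemma lmul_ideal: "a \<in> ideal n R \<Longrightarrow> u \<in> words n \<Longrightarrow> lmul u a \<in> ideal n R"
  unfolding ideal_def
proof (induction a rule: cspan.induct)
  case (base r)
  then show ?case
    by (auto simp: lmul_lmul LieRel_lmul intro!: cspan.base) (metis words_append)
qed (simp_all only: lmul_pointwise cspan.intros)

lemma lmul_relation_in_ideal: "r \<in> R \<Longrightarrow> u \<in> words n \<Longrightarrow> lmul u r \<in> ideal n R"
  unfolding ideal_def by (rule cspan.base) blast

lemma relation_in_ideal: "r \<in> R \<Longrightarrow> r \<in> ideal n R"
  using lmul_relation_in_ideal[of r R "[]"] by simp

lemma ideal_subset:
  assumes "R \<subseteq> ideal n R'"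
  shows "ideal n R \<subseteq> ideal n R'"
proof
  fix a assume "a \<in> ideal n R"
  then show "a \<in> ideal n R'"
    unfolding ideal_def[of n R]
  proof (induction a rule: cspan.induct)
    case (base r)
    with assms show ?case
      by (auto simp: ideal_def intro: cspan.base lmul_ideal[unfolded ideal_def])
  qed (simp_all only: ideal_def cspan.intros)
qed

lemma cong_commutator:
  "\<lbrakk>p \<in> words n; q \<in> words n; in_sl n X; in_sl n Y\<rbrakk> \<Longrightarrow>
   cong_mod (ideal n R) (wd (p @ [X, Y] @ q)) (wd (p @ [Y, X] @ q) + wd (p @ [br n X Y] @ q))"
  using LieRel_commutator unfolding cong_mod_def ideal_def
  by (auto intro!: cspan.base simp: fun_diff_def plus_fun_def algebra_simps)

lemma cong_madd:
  "\<lbrakk>p \<in> words n; q \<in> words n; in_sl n X; in_sl n Y\<rbrakk> \<Longrightarrow>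
   cong_mod (ideal n R) (wd (p @ [madd X Y] @ q)) (wd (p @ [X] @ q) + wd (p @ [Y] @ q))"
  using LieRel_madd unfolding cong_mod_def ideal_def
  by (auto intro!: cspan.base simp: fun_diff_def plus_fun_def algebra_simps)

lemma cong_mscale:
  "\<lbrakk>p \<in> words n; q \<in> words n; in_sl n X\<rbrakk> \<Longrightarrow>
   cong_mod (ideal n R) (wd (p @ [mscale c X] @ q)) (cscale c (wd (p @ [X] @ q)))"
  using LieRel_mscale unfolding cong_mod_def ideal_def
  by (auto intro!: cspan.base simp: fun_diff_def cscale_def)

lemma madd_in_ideal:
  assumes "in_sl n A" "in_sl n B" "wd [A] \<in> ideal n R" "wd [B] \<in> ideal n R"
  shows "wd [madd A B] \<in> ideal n R"
proof -
  have "cong_mod (ideal n R) (wd [madd A B]) (wd [A] + wd [B])"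
    using cong_madd[of "[]" n "[]" A B R] assms(1,2) by simp
  then show ?thesis
    using assms(3,4) by (meson cong_mod_member ideal_add)
qed

section \<open>Matrix computations in \<open>sl\<^sub>n[t]\<close>\<close>

definition t2_divisible :: "mat \<Rightarrow> bool" where
  "t2_divisible X \<longleftrightarrow> (\<forall>i j. tsq dvd X i j)"

definition t_divisible :: "mat \<Rightarrow> bool" where
  "t_divisible X \<longleftrightarrow> (\<forall>i j. [:0, 1:] dvd X i j)"

definition diag_mat :: "(nat \<Rightarrow> complex poly) \<Rightarrow> mat" where
  "diag_mat d = (\<lambda>i j. if i = j then d i else 0)"

lemma br_in_sl:
  assumes "in_sl n X" "in_sl n Y"
  shows "in_sl n (br n X Y)"
proof -
  have "(\<Sum>i<n. \<Sum>k<n. X i k * Y k i) = (\<Sum>i<n. \<Sum>k<n. Y i k * X k i)"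
    by (subst sum.swap) (simp add: mult.commute)
  then have "(\<Sum>i<n. br n X Y i i) = 0"
    unfolding br_def by (simp add: sum_subtractf)
  with assms show ?thesis
    by (auto simp: in_sl_def br_def)
qed

lemma in_sl_elem: "i \<noteq> j \<Longrightarrow> i < n \<Longrightarrow> j < n \<Longrightarrow> in_sl n (elem i j p)"
  unfolding in_sl_def by (auto simp: elem_def intro!: sum.neutral)

lemma t2_divisible_br_left: "t2_divisible X \<Longrightarrow> t2_divisible (br n X Y)"
  unfolding t2_divisible_def br_def by (intro allI dvd_sum dvd_diff dvd_mult dvd_mult2) blast+

lemma t2_divisible_br_t_divisible:
  assumes "t_divisible X" "t_divisible Y"
  shows "t2_divisible (br n X Y)"
proof -
  have "tsq = [:0, 1:] * [:0, 1:]"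
    by (simp add: tsq_def)
  with assms show ?thesis
    unfolding t2_divisible_def t_divisible_def br_def
    by (metis (no_types, lifting) dvd_diff dvd_sum mult_dvd_mono)
qed

lemma sum_elem_mult: "b < n \<Longrightarrow> (\<Sum>k<n. elem a b p i k * Y k j) = (if i = a then p * Y b j else 0)"
  by (simp add: elem_def if_distrib[of "\<lambda>x. x * _"] cong: if_cong)

lemma sum_diag_mat_mult: "(\<Sum>k<n. diag_mat d i k * Y k j) = (if i < n then d i * Y i j else 0)"
  by (simp add: diag_mat_def if_distrib[of "\<lambda>x. x * _"] cong: if_cong)

lemma br_eq_diff_sums: "br n X Y i j = (\<Sum>k<n. X i k * Y k j) - (\<Sum>k<n. Y i k * X k j)"
  by (simp add: br_def sum_subtractf)

lemma br_elem_elem_opposite: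
  assumes "a \<noteq> b" "a < n" "b < n"
  shows "br n (elem a b p) (elem b a q) =
    diag_mat (\<lambda>i. if i = a then p * q else if i = b then - (p * q) else 0)"
  using assms by (simp add: fun_eq_iff br_eq_diff_sums sum_elem_mult) (auto simp: elem_def diag_mat_def)

lemma br_elem_elem_same: "a \<noteq> b \<Longrightarrow> a < n \<Longrightarrow> b < n \<Longrightarrow> br n (elem a b p) (elem a b q) = (\<lambda>_ _. 0)"
  by (simp add: fun_eq_iff br_eq_diff_sums sum_elem_mult) (auto simp: elem_def)

lemma br_diag_elem:
  assumes "c < n" "d < n"
  shows "br n (diag_mat D) (elem c d q) = elem c d ((D c - D d) * q)"
  using assms by (simp add: fun_eq_iff br_eq_diff_sums sum_elem_mult sum_diag_mat_mult)
    (auto simp: elem_def diag_mat_def algebra_simps)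

section \<open>Relations annihilating \<open>sl\<^sub>n \<otimes> t\<^sup>2\<close>\<close>

definition annihilated_by_t2 :: "nat \<Rightarrow> vec set \<Rightarrow> bool" where
  "annihilated_by_t2 n R \<longleftrightarrow> (\<forall>X. in_sl n X \<longrightarrow> t2_divisible X \<longrightarrow> wd [X] \<in> ideal n R)"

lemma t2_factor_in_ideal:
  assumes R: "annihilated_by_t2 n R"
    and "in_sl n X" "t2_divisible X" "u \<in> words n" "v \<in> words n"
  shows "wd (u @ [X] @ v) \<in> ideal n R"
  using assms(2-)
proof (induction v arbitrary: u X)
  case Nil
  with R show ?case
    using lmul_ideal[of "wd [X]" n R u] by (simp add: annihilated_by_t2_def)
next
  case (Cons Z v)
  \<comment> \<open>moving \<open>X\<close> to the right end only creates brackets with \<open>X\<close>, again divisible by \<open>t\<^sup>2\<close>\<close>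
  have "cong_mod (ideal n R) (wd (u @ [X, Z] @ v)) (wd (u @ [Z, X] @ v) + wd (u @ [br n X Z] @ v))"
    using Cons.prems by (intro cong_commutator) auto
  moreover have "wd (u @ [Z, X] @ v) \<in> ideal n R"
    using Cons.IH[of X "u @ [Z]"] Cons.prems by simp
  moreover have "wd (u @ [br n X Z] @ v) \<in> ideal n R"
    using Cons.IH[of "br n X Z" u] Cons.prems by (simp add: br_in_sl t2_divisible_br_left)
  ultimately show ?case
    by (simp add: cong_mod_member ideal_add)
qed

lemma cong_commute_replicate:
  assumes R: "annihilated_by_t2 n R"
    and A: "in_sl n A" and B: "in_sl n B" and AB: "t2_divisible (br n A B)"
    and "u \<in> words n" "v \<in> words n"
  shows "cong_mod (ideal n R) (wd (u @ [A] @ replicate k B @ v)) (wd (u @ replicate k B @ [A] @ v))"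
  using assms(5-)
proof (induction k arbitrary: u)
  case (Suc k)
  have "cong_mod (ideal n R) (wd (u @ [A, B] @ replicate k B @ v))
          (wd (u @ [B, A] @ replicate k B @ v) + wd (u @ [br n A B] @ replicate k B @ v))"
    using Suc.prems A B by (intro cong_commutator) auto
  also have "cong_mod (ideal n R) \<dots> (wd (u @ [B, A] @ replicate k B @ v))"
    using t2_factor_in_ideal[OF R br_in_sl[OF A B] AB] Suc.prems B
    by (intro cong_mod_add_member) auto
  also have "cong_mod (ideal n R) \<dots> (wd (u @ replicate (Suc k) B @ [A] @ v))"
    using Suc.IH[of "u @ [B]"] Suc.prems B by simp
  finally show ?case
    by simp
qed simp

section \<open>Garland's identity\<close>

text \<open>For the positive root \<open>\<alpha> = \<epsilon>\<^sub>a - \<epsilon>\<^sub>b\<close> these are \<open>e\<^sub>\<alpha> \<otimes> t\<close>, \<open>f\<^sub>\<alpha>\<close>, \<open>f\<^sub>\<alpha> \<otimes> t\<close> and \<open>h\<^sub>\<alpha> \<otimes> t\<close>.\<close>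

definition e_root_t :: "nat \<Rightarrow> nat \<Rightarrow> mat" where
  "e_root_t a b = elem a b [:0, 1:]"

definition f_root :: "nat \<Rightarrow> nat \<Rightarrow> mat" where
  "f_root a b = elem b a 1"

definition f_root_t :: "nat \<Rightarrow> nat \<Rightarrow> mat" where
  "f_root_t a b = elem b a [:0, 1:]"

definition h_root_t :: "nat \<Rightarrow> nat \<Rightarrow> mat" where
  "h_root_t a b = diag_mat (\<lambda>i. if i = a then [:0, 1:] else if i = b then - [:0, 1:] else 0)"

lemma in_sl_root_vectors:
  assumes "a < b" "b < n"
  shows "in_sl n (e_root_t a b)" "in_sl n (f_root a b)" "in_sl n (f_root_t a b)" "in_sl n (h_root_t a b)"
proof -
  show "in_sl n (e_root_t a b)" "in_sl n (f_root a b)" "in_sl n (f_root_t a b)"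
    using assms by (simp_all add: e_root_t_def f_root_def f_root_t_def in_sl_elem)
  have "(\<Sum>i<n. h_root_t a b i i) =
        (\<Sum>i<n. (if i = a then [:0, 1:] else 0) + (if i = b then - [:0, 1:] else 0))"
    using assms by (intro sum.cong) (auto simp: h_root_t_def diag_mat_def)
  also have "\<dots> = 0"
    using assms by (simp add: sum.distrib)
  finally show "in_sl n (h_root_t a b)"
    using assms by (auto simp: in_sl_def h_root_t_def diag_mat_def)
qed

lemma br_e_root_t_f_root: "a < b \<Longrightarrow> b < n \<Longrightarrow> br n (e_root_t a b) (f_root a b) = h_root_t a b"
  by (simp add: e_root_t_def f_root_def br_elem_elem_opposite h_root_t_def cong: if_cong)

lemma br_h_root_t_f_root:
  "a < b \<Longrightarrow> b < n \<Longrightarrow> br n (h_root_t a b) (f_root a b) = mscale (-2) (f_root_t a b)"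
  unfolding h_root_t_def f_root_def f_root_t_def
  by (simp add: br_diag_elem) (auto simp: fun_eq_iff mscale_def elem_def)

lemma t2_divisible_br_f_root_f_root_t:
  "a < b \<Longrightarrow> b < n \<Longrightarrow> t2_divisible (br n (f_root a b) (f_root_t a b))"
  by (simp add: f_root_def f_root_t_def br_elem_elem_same t2_divisible_def)

lemma t2_divisible_br_e_root_t_f_root_t: "t2_divisible (br n (e_root_t a b) (f_root_t a b))"
  by (rule t2_divisible_br_t_divisible) (auto simp: t_divisible_def e_root_t_def f_root_t_def elem_def)

fun garland_coeff :: "nat \<Rightarrow> nat \<Rightarrow> complex" where
  "garland_coeff 0 s = 1"
| "garland_coeff (Suc k) s = - of_nat (s * (s - 1)) * garland_coeff k (s - 2)"

lemma garland_coeff_nonzero: "garland_coeff k (2 * k) \<noteq> 0"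
proof (induction k)
  case (Suc k)
  have "2 * Suc k - 2 = 2 * k"
    by simp
  moreover have "of_nat (2 * Suc k * (2 * Suc k - 1)) \<noteq> (0 :: complex)"
    by (simp only: of_nat_eq_0_iff) simp
  ultimately show ?case
    using Suc.IH by (simp only: garland_coeff.simps mult_eq_0_iff neg_equal_0_iff_equal) simp
qed simp

context
  fixes n a b :: nat and R :: "vec set"
  assumes root: "a < b" "b < n"
    and R_t2: "annihilated_by_t2 n R"
    and R_e: "wd [e_root_t a b] \<in> ideal n R"
    and R_h: "wd [h_root_t a b] \<in> ideal n R"
begin

lemma cong_f_root_f_root_t:
  "v \<in> words n \<Longrightarrow> w \<in> words n \<Longrightarrow>
   cong_mod (ideal n R) (wd (v @ [f_root a b, f_root_t a b] @ w)) (wd (v @ [f_root_t a b, f_root a b] @ w))"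
  using cong_commute_replicate[OF R_t2 _ _ t2_divisible_br_f_root_f_root_t[OF root], of v w 1]
    in_sl_root_vectors[OF root] by simp

lemma cong_h_root_t_f_root_power:
  "v \<in> words n \<Longrightarrow>
   cong_mod (ideal n R) (wd (v @ [h_root_t a b] @ replicate s (f_root a b)))
     (cscale (- 2 * of_nat s) (wd (v @ [f_root_t a b] @ replicate (s - 1) (f_root a b))))"
proof (induction s arbitrary: v)
  case 0
  then show ?case
    using lmul_ideal[OF R_h] by (simp add: cong_mod_def fun_diff_def)
next
  case (Suc s)
  note sl = in_sl_root_vectors[OF root] and v = Suc.prems
  let ?f = "f_root a b" and ?ft = "f_root_t a b" and ?h = "h_root_t a b"
  have "cong_mod (ideal n R) (wd (v @ [?h, ?f] @ replicate s ?f))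
          (wd (v @ [?f, ?h] @ replicate s ?f) + wd (v @ [br n ?h ?f] @ replicate s ?f))"
    using v sl by (intro cong_commutator) auto
  also have "cong_mod (ideal n R) \<dots>
      (cscale (- 2 * of_nat s) (wd (v @ [?f, ?ft] @ replicate (s - 1) ?f))
       + cscale (-2) (wd (v @ [?ft] @ replicate s ?f)))"
    using Suc.IH[of "v @ [?f]"] cong_mscale[of v n "replicate s ?f" ?ft R "-2"] v sl
    by (intro cong_mod_add) (simp_all add: br_h_root_t_f_root[OF root])
  also have "cong_mod (ideal n R) \<dots>
      (cscale (- 2 * of_nat s) (wd (v @ [?ft] @ replicate s ?f)) + cscale (-2) (wd (v @ [?ft] @ replicate s ?f)))"
  proof (cases s)
    case (Suc s')
    have "cong_mod (ideal n R) (wd (v @ [?f, ?ft] @ replicate s' ?f)) (wd (v @ [?ft] @ replicate s ?f))"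
      using cong_f_root_f_root_t[of v "replicate s' ?f"] Suc v sl by simp
    with Suc show ?thesis
      by (intro cong_mod_add cong_mod_cscale cong_mod_refl) simp
  qed simp
  finally show ?case
    by (simp add: cscale_add algebra_simps)
qed

lemma cong_e_root_t_f_root_power:
  "v \<in> words n \<Longrightarrow>
   cong_mod (ideal n R) (wd (v @ [e_root_t a b] @ replicate s (f_root a b)))
     (cscale (- of_nat (s * (s - 1))) (wd (v @ [f_root_t a b] @ replicate (s - 2) (f_root a b))))"
proof (induction s arbitrary: v)
  case 0
  then show ?case
    using lmul_ideal[OF R_e] by (simp add: cong_mod_def fun_diff_def)
next
  case (Suc s)
  note sl = in_sl_root_vectors[OF root] and v = Suc.prems
  let ?f = "f_root a b" and ?ft = "f_root_t a b" and ?e = "e_root_t a b"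
  have "cong_mod (ideal n R) (wd (v @ [?e, ?f] @ replicate s ?f))
          (wd (v @ [?f, ?e] @ replicate s ?f) + wd (v @ [br n ?e ?f] @ replicate s ?f))"
    using v sl by (intro cong_commutator) auto
  also have "cong_mod (ideal n R) \<dots>
      (cscale (- of_nat (s * (s - 1))) (wd (v @ [?f, ?ft] @ replicate (s - 2) ?f))
       + cscale (- 2 * of_nat s) (wd (v @ [?ft] @ replicate (s - 1) ?f)))"
    using Suc.IH[of "v @ [?f]"] cong_h_root_t_f_root_power[OF v] v sl
    by (intro cong_mod_add) (simp_all add: br_e_root_t_f_root[OF root])
  also have "cong_mod (ideal n R) \<dots>
      (cscale (- of_nat (s * (s - 1))) (wd (v @ [?ft] @ replicate (s - 1) ?f))
       + cscale (- 2 * of_nat s) (wd (v @ [?ft] @ replicate (s - 1) ?f)))"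
  proof (cases "s \<ge> 2")
    case True
    then have "replicate (s - 1) ?f = [?f] @ replicate (s - 2) ?f"
      by (cases s; cases "s - 1") auto
    moreover have "cong_mod (ideal n R) (wd (v @ [?f, ?ft] @ replicate (s - 2) ?f))
        (wd (v @ [?ft, ?f] @ replicate (s - 2) ?f))"
      using cong_f_root_f_root_t v sl by simp
    ultimately show ?thesis
      by (intro cong_mod_add cong_mod_cscale cong_mod_refl) simp
  next
    case False
    then have "s * (s - 1) = 0"
      by (cases s) auto
    then show ?thesis
      by (simp only: of_nat_0 minus_zero cscale_0 cong_mod_refl)
  qed
  finally have "cong_mod (ideal n R) (wd (v @ [?e] @ replicate (Suc s) ?f))
      (cscale (- of_nat (s * (s - 1)) + - 2 * of_nat s) (wd (v @ [?ft] @ replicate (s - 1) ?f)))"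
    by (simp add: cscale_add)
  moreover have "(- of_nat (s * (s - 1)) + - 2 * of_nat s :: complex) = - of_nat (Suc s * (Suc s - 1))"
    by (cases s) (simp_all add: algebra_simps)
  ultimately show ?case
    by simp
qed

lemma cong_e_root_t_power:
  "cong_mod (ideal n R)
     (wd (replicate k (e_root_t a b) @ replicate j (f_root_t a b) @ replicate s (f_root a b)))
     (cscale (garland_coeff k s) (wd (replicate (j + k) (f_root_t a b) @ replicate (s - 2 * k) (f_root a b))))"
proof (induction k arbitrary: j s)
  case (Suc k)
  note sl = in_sl_root_vectors[OF root]
  let ?f = "f_root a b" and ?ft = "f_root_t a b" and ?e = "e_root_t a b"
  have "cong_mod (ideal n R) (wd (replicate k ?e @ [?e] @ replicate j ?ft @ replicate s ?f))
      (wd (replicate k ?e @ replicate j ?ft @ [?e] @ replicate s ?f))"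
    using sl by (intro cong_commute_replicate[OF R_t2 _ _ t2_divisible_br_e_root_t_f_root_t]) simp_all
  also have "cong_mod (ideal n R) \<dots>
      (cscale (- of_nat (s * (s - 1))) (wd (replicate k ?e @ replicate (Suc j) ?ft @ replicate (s - 2) ?f)))"
    using cong_e_root_t_f_root_power[of "replicate k ?e @ replicate j ?ft" s] sl
    by (simp add: replicate_app_Cons_same)
  also have "cong_mod (ideal n R) \<dots>
      (cscale (- of_nat (s * (s - 1))) (cscale (garland_coeff k (s - 2))
         (wd (replicate (Suc j + k) ?ft @ replicate (s - 2 - 2 * k) ?f))))"
    using Suc.IH by (rule cong_mod_cscale)
  finally show ?case
    by (simp add: replicate_app_Cons_same)
qed simp

lemma f_root_t_power_in_ideal:
  assumes R_f: "wd (replicate N (f_root a b)) \<in> ideal n R" and "N \<le> 2 * k"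
  shows "wd (replicate k (f_root_t a b)) \<in> ideal n R"
proof -
  let ?f = "f_root a b" and ?ft = "f_root_t a b" and ?e = "e_root_t a b"
  have "replicate (2 * k) ?f = replicate (2 * k - N) ?f @ replicate N ?f"
    using \<open>N \<le> 2 * k\<close> by (simp add: replicate_add[symmetric])
  then have "wd (replicate k ?e @ replicate (2 * k) ?f) \<in> ideal n R"
    using lmul_ideal[OF R_f, of "replicate k ?e @ replicate (2 * k - N) ?f"] in_sl_root_vectors[OF root]
    by simp
  moreover have "cong_mod (ideal n R) (cscale (garland_coeff k (2 * k)) (wd (replicate k ?ft)))
      (wd (replicate k ?e @ replicate (2 * k) ?f))"
    using cong_e_root_t_power[of k 0 "2 * k"] by (simp add: cong_mod_sym)
  ultimately have "cscale (garland_coeff k (2 * k)) (wd (replicate k ?ft)) \<in> ideal n R"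
    by (simp add: cong_mod_member)
  then have "cscale (inverse (garland_coeff k (2 * k))) (cscale (garland_coeff k (2 * k)) (wd (replicate k ?ft))) \<in> ideal n R"
    unfolding ideal_def by (rule cspan_cscale)
  then show ?thesis
    using garland_coeff_nonzero[of k] by simp
qed

end

section \<open>The maximal pair of weights\<close>

lemma lam1max_le: "lam1max m i \<le> m i"
proof (cases "even (m i)")
  case False
  then obtain q where "m i = 2 * q + 1"
    by (rule oddE)
  then show ?thesis
    by (simp add: lam1max_def)
qed (simp add: lam1max_def)

lemma lam1max_add_lam2max: "(\<lambda>i. lam1max m i + lam2max m i) = m"
  using lam1max_le[of m] by (simp add: fun_eq_iff lam2max_def)

definition lam_diff :: "(nat \<Rightarrow> nat) \<Rightarrow> nat \<Rightarrow> int" where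
  "lam_diff m i = int (lam1max m i) - int (lam2max m i)"

lemma lam_diff_eq:
  "lam_diff m i =
   (if odd (m i) then (if odd (card {j\<in>{1..<i}. odd (m j)}) then 1 else -1) else 0)"
proof (cases "even (m i)")
  case True
  then show ?thesis
    by (auto simp: lam_diff_def lam2max_def lam1max_def)
next
  case False
  then obtain q where "m i = 2 * q + 1"
    by (rule oddE)
  then show ?thesis
    by (auto simp: lam_diff_def lam2max_def lam1max_def)
qed

lemma sum_lam_diff: "(\<Sum>j\<in>{1..i}. lam_diff m j) = - int (card {j\<in>{1..i}. odd (m j)} mod 2)"
proof (induction i)
  case (Suc i)
  define c where "c = card {j\<in>{1..i}. odd (m j)}"
  have "{j\<in>{1..<Suc i}. odd (m j)} = {j\<in>{1..i}. odd (m j)}"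
    by auto
  then have step: "lam_diff m (Suc i) = (if odd (m (Suc i)) then (if odd c then 1 else -1) else 0)"
    by (simp add: lam_diff_eq c_def)
  have "{j\<in>{1..Suc i}. odd (m j)} =
      (if odd (m (Suc i)) then insert (Suc i) {j\<in>{1..i}. odd (m j)} else {j\<in>{1..i}. odd (m j)})"
    by (auto simp: le_Suc_eq)
  then have card: "card {j\<in>{1..Suc i}. odd (m j)} = c + (if odd (m (Suc i)) then 1 else 0)"
    by (simp add: c_def)
  have "{1..Suc i} = insert (Suc i) {1..i}"
    by auto
  then have "(\<Sum>j\<in>{1..Suc i}. lam_diff m j) = lam_diff m (Suc i) - int (c mod 2)"
    using Suc.IH by (simp add: c_def)
  then show ?case
    unfolding step card
    by (cases "odd (m (Suc i))"; cases "odd c") (simp_all add: odd_iff_mod_2_eq_one mod_Suc)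
qed simp

lemma abs_wt_root_lam1max_minus_lam2max_le:
  assumes "a < b"
  shows "\<bar>int (wt_root (lam1max m) a b) - int (wt_root (lam2max m) a b)\<bar> \<le> 1"
proof -
  have bounds: "- 1 \<le> (\<Sum>j\<in>{1..i}. lam_diff m j) \<and> (\<Sum>j\<in>{1..i}. lam_diff m j) \<le> 0" for i
    unfolding sum_lam_diff by linarith
  have "{1..b} = {1..a} \<union> {a+1..b}"
    using assms by auto
  then have "(\<Sum>j\<in>{1..b}. lam_diff m j) = (\<Sum>j\<in>{1..a}. lam_diff m j) + (\<Sum>j\<in>{a+1..b}. lam_diff m j)"
    by (simp add: sum.union_disjoint)
  moreover have "int (wt_root (lam1max m) a b) - int (wt_root (lam2max m) a b) = (\<Sum>j\<in>{a+1..b}. lam_diff m j)"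
    by (simp add: wt_root_def lam_diff_def sum_subtractf)
  ultimately show ?thesis
    using bounds[of a] bounds[of b] by linarith
qed

lemma wt_root_le_twice_min_lam_max:
  assumes "a < b"
  shows "wt_root m a b + 1 \<le> 2 * (min (wt_root (lam1max m) a b) (wt_root (lam2max m) a b) + 1)"
proof -
  have "wt_root (lam1max m) a b + wt_root (lam2max m) a b = wt_root m a b"
    unfolding wt_root_def lam2max_def using lam1max_le[of m] by (simp add: sum.distrib[symmetric])
  with abs_wt_root_lam1max_minus_lam2max_le[OF assms, of m] show ?thesis
    by (auto simp: min_def abs_if split: if_splits)
qed

section \<open>Comparing the two sets of relations\<close>

definition low_part :: "complex poly \<Rightarrow> complex poly" where
  "low_part p = [:coeff p 0, coeff p 1:]"

lemma degree_low_part: "degree (low_part p) \<le> 1"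
  by (simp add: low_part_def degree_pCons_eq_if)

lemma low_part_0 [simp]: "low_part 0 = 0"
  by (simp add: low_part_def)

lemma tsq_dvd_diff_low_part: "tsq dvd p - low_part p"
proof -
  define q where "q = p - low_part p"
  obtain c q' where q: "q = pCons c q'"
    by (rule pCons_cases)
  obtain c' q'' where q': "q' = pCons c' q''"
    by (rule pCons_cases)
  have "coeff q 0 = 0" "coeff q 1 = 0"
    by (simp_all add: q_def low_part_def)
  with q q' have "q = tsq * q''"
    by (simp add: tsq_def)
  then show ?thesis
    unfolding q_def by (rule dvdI)
qed

lemma tsq_dvd_coeff:
  assumes "tsq dvd p"
  shows "coeff p 0 = 0" "coeff p 1 = 0"
  using assms by (auto simp: tsq_def elim!: dvdE)

lemma annihilated_by_t2_RelW: "annihilated_by_t2 n (RelW n m)"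
  unfolding annihilated_by_t2_def t2_divisible_def
proof (intro allI impI)
  fix X
  assume "in_sl n X" "\<forall>i j. tsq dvd X i j"
  then have "wd [X] \<in> RelW n m"
    unfolding RelW_def by blast
  then show "wd [X] \<in> ideal n (RelW n m)"
    by (rule relation_in_ideal)
qed

lemma annihilated_by_t2_RelF: "annihilated_by_t2 n (RelF n l1 l2)"
  unfolding annihilated_by_t2_def
proof (intro allI impI)
  fix X
  assume X: "in_sl n X" and t2: "t2_divisible X"
  define U where "U = (\<lambda>i j. if i < j then X i j else 0)"
  define D where "D = (\<lambda>i j. if i = j then X i j else 0)"
  define L where "L = (\<lambda>i j. if j < i then X i j else 0)"
  have out: "\<And>i j. n \<le> i \<or> n \<le> j \<Longrightarrow> X i j = 0" and tr: "(\<Sum>i<n. X i i) = 0"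
    using X unfolding in_sl_def by blast+
  have sl: "in_sl n U" "in_sl n D" "in_sl n L"
    using out tr by (auto simp: in_sl_def U_def D_def L_def)
  have "wd [U] \<in> RelF n l1 l2"
    using sl(1) unfolding RelF_def by (auto simp: strict_upper_def U_def)
  moreover have "wd [D] \<in> RelF n l1 l2"
    using sl(2) t2 tsq_dvd_coeff unfolding RelF_def t2_divisible_def
    by (auto simp: diagonal_def D_def)
  moreover have "wd [L] \<in> RelF n l1 l2"
    using sl(3) t2 unfolding RelF_def t2_divisible_def by (auto simp: strict_lower_def L_def)
  moreover have "X = madd U (madd D L)"
    by (auto simp: fun_eq_iff madd_def U_def D_def L_def)
  moreover have "in_sl n (madd D L)"
    using sl by (auto simp: in_sl_def madd_def sum.distrib)
  ultimately show "wd [X] \<in> ideal n (RelF n l1 l2)"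
    using sl by (metis madd_in_ideal relation_in_ideal)
qed

lemma strict_upper_in_ideal_RelW:
  assumes X: "in_sl n X" and up: "strict_upper X"
  shows "wd [X] \<in> ideal n (RelW n m)"
proof -
  define X1 where "X1 = (\<lambda>i j. low_part (X i j))"
  define X2 where "X2 = (\<lambda>i j. X i j - low_part (X i j))"
  have "\<And>i j. n \<le> i \<or> n \<le> j \<Longrightarrow> X i j = 0" "\<And>i. X i i = 0"
    using X up unfolding in_sl_def strict_upper_def by auto
  then have sl: "in_sl n X1" "in_sl n X2"
    by (auto simp: in_sl_def X1_def X2_def)
  have "wd [X1] \<in> RelW n m"
    using sl(1) up degree_low_part unfolding RelW_def by (auto simp: strict_upper_def X1_def)
  moreover have "wd [X2] \<in> ideal n (RelW n m)"
    using annihilated_by_t2_RelW sl(2) tsq_dvd_diff_low_part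
    by (auto simp: annihilated_by_t2_def t2_divisible_def X2_def)
  moreover have "X = madd X1 X2"
    by (simp add: madd_def X1_def X2_def)
  ultimately show ?thesis
    using sl by (metis madd_in_ideal relation_in_ideal)
qed

lemma diagonal_in_ideal_RelW:
  assumes X: "in_sl n X" and dg: "diagonal X" and c0: "\<forall>i. coeff (X i i) 0 = 0"
  shows "wd [X] \<in> ideal n (RelW n m)"
proof -
  define X1 where "X1 = diag_mat (\<lambda>i. low_part (X i i))"
  define X2 where "X2 = (\<lambda>i j. X i j - X1 i j)"
  have out: "\<And>i j. n \<le> i \<or> n \<le> j \<Longrightarrow> X i j = 0" and tr: "(\<Sum>i<n. X i i) = 0"
    using X unfolding in_sl_def by blast+
  have "(\<Sum>i<n. X1 i i) = (\<Sum>i<n. monom (coeff (X i i) 1) 1)"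
    by (rule sum.cong) (auto simp: X1_def diag_mat_def low_part_def c0 monom_altdef)
  also have "\<dots> = monom (coeff (\<Sum>i<n. X i i) 1) 1"
    by (simp add: monom_sum coeff_sum)
  also have "\<dots> = 0"
    using tr by simp
  finally have sl: "in_sl n X1" "in_sl n X2"
    using out tr by (auto simp: in_sl_def X2_def X1_def diag_mat_def sum_subtractf)
  have "wd [X1] \<in> RelW n m"
    using sl(1) c0 degree_low_part unfolding RelW_def
    by (auto simp: diagonal_def X1_def diag_mat_def low_part_def)
  moreover have "wd [X2] \<in> ideal n (RelW n m)"
    using annihilated_by_t2_RelW sl(2) tsq_dvd_diff_low_part dg
    by (auto simp: annihilated_by_t2_def t2_divisible_def X2_def X1_def diag_mat_def diagonal_def)
  moreover have "X = madd X1 X2"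
    by (simp add: madd_def X2_def)
  ultimately show ?thesis
    using sl by (metis madd_in_ideal relation_in_ideal)
qed

lemma RelW_subset_ideal_RelF: "RelW n m \<subseteq> ideal n (RelF n (lam1max m) (lam2max m))"
proof
  fix r
  assume "r \<in> RelW n m"
  then show "r \<in> ideal n (RelF n (lam1max m) (lam2max m))"
    unfolding RelW_def
  proof (elim UnE)
    assume "r \<in> {wd [X] | X. in_sl n X \<and> (\<forall>i j. tsq dvd X i j)}"
    then show ?thesis
      using annihilated_by_t2_RelF by (auto simp: annihilated_by_t2_def t2_divisible_def)
  next
    assume "r \<in> {wd [X] | X. in_sl n X \<and> strict_upper X \<and> (\<forall>i j. degree (X i j) \<le> 1)}"
    then have "r \<in> RelF n (lam1max m) (lam2max m)"
      unfolding RelF_def by blast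
    then show ?thesis
      by (rule relation_in_ideal)
  next
    assume "r \<in> {wd [X] | X. in_sl n X \<and> diagonal X \<and> (\<forall>i. coeff (X i i) 0 = 0 \<and> degree (X i i) \<le> 1)}"
    then have "r \<in> RelF n (lam1max m) (lam2max m)"
      unfolding RelF_def by blast
    then show ?thesis
      by (rule relation_in_ideal)
  qed (rule relation_in_ideal, simp add: RelF_def lam1max_add_lam2max)+
qed

lemma RelF_subset_ideal_RelW: "RelF n (lam1max m) (lam2max m) \<subseteq> ideal n (RelW n m)"
proof
  fix r
  assume "r \<in> RelF n (lam1max m) (lam2max m)"
  then show "r \<in> ideal n (RelW n m)"
    unfolding RelF_def lam1max_add_lam2max
  proof (elim UnE)
    assume "r \<in> {wd [X] | X. in_sl n X \<and> strict_upper X}"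
    then show ?thesis
      using strict_upper_in_ideal_RelW by blast
  next
    assume "r \<in> {wd [X] | X. in_sl n X \<and> diagonal X \<and> (\<forall>i. coeff (X i i) 0 = 0)}"
    then show ?thesis
      using diagonal_in_ideal_RelW by blast
  next
    assume "r \<in> {wd [X] | X. in_sl n X \<and> strict_lower X \<and> (\<forall>i j. tsq dvd X i j)}"
    then show ?thesis
      using annihilated_by_t2_RelW by (auto simp: annihilated_by_t2_def t2_divisible_def)
  next
    assume "r \<in> {wd (replicate (min (wt_root (lam1max m) a b) (wt_root (lam2max m) a b) + 1)
        (elem b a [:0, 1:])) | a b. a < b \<and> b < n}"
    then obtain a b where r: "r = wd (replicate (min (wt_root (lam1max m) a b) (wt_root (lam2max m) a b) + 1)
        (f_root_t a b))" and ab: "a < b" "b < n"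
      unfolding f_root_t_def by blast
    show ?thesis
      unfolding r
    proof (rule f_root_t_power_in_ideal[OF ab annihilated_by_t2_RelW])
      show "wd [e_root_t a b] \<in> ideal n (RelW n m)"
        using ab in_sl_root_vectors[OF ab] strict_upper_in_ideal_RelW
        by (auto simp: e_root_t_def strict_upper_def elem_def)
      show "wd [h_root_t a b] \<in> ideal n (RelW n m)"
        using ab in_sl_root_vectors[OF ab] diagonal_in_ideal_RelW
        by (auto simp: h_root_t_def diag_mat_def diagonal_def)
      show "wd (replicate (wt_root m a b + 1) (f_root a b)) \<in> ideal n (RelW n m)"
        using ab unfolding f_root_def RelW_def by (blast intro: relation_in_ideal)
      show "wt_root m a b + 1 \<le> 2 * (min (wt_root (lam1max m) a b) (wt_root (lam2max m) a b) + 1)"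
        using ab(1) by (rule wt_root_le_twice_min_lam_max)
    qed
  qed (rule relation_in_ideal, simp add: RelW_def)+
qed

lemma ideal_RelW_eq_ideal_RelF: "ideal n (RelW n m) = ideal n (RelF n (lam1max m) (lam2max m))"
  using ideal_subset[OF RelW_subset_ideal_RelF] ideal_subset[OF RelF_subset_ideal_RelW] by blast

lemma mod_iso_refl: "(\<lambda>_. 0) \<in> L \<Longrightarrow> mod_iso n L L"
  unfolding mod_iso_def by (intro exI[of _ "\<lambda>a. a"] conjI ballI allI impI bexI) auto

theorem lemma9p5:
  fixes n :: nat and m :: "nat \<Rightarrow> nat"
  assumes "2 \<le> n"
  shows "mod_iso n (ideal n (RelW n m)) (ideal n (RelF n (lam1max m) (lam2max m)))"
proof -
  have "(\<lambda>_. 0) \<in> ideal n (RelW n m)"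
    unfolding ideal_def by (rule cspan.zero)
  then show ?thesis
    unfolding ideal_RelW_eq_ideal_RelF by (rule mod_iso_refl)
qed

end
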